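(* Let $(X,Y)$ be a pair of real-valued random variables, and assume there exist disjoint intervals $G$ and $H$ and Borel sets $G'\subseteq G$, $H'\subseteq H$ such that the events $\{X\in G'\}$ and $\{Y\in H'\}$ are almost surely equal and $P(X\in G')>0$. Then there is no integrable random variable $Z$ with $X=E(Z\mid X)$ and $Y=E(Z\mid Y)$. In particular, if $(X,Y)$ takes values in $[0,1]^2$ and satisfies this condition, then $(X,Y)$ is not coherent.
   Context: A pair $(X,Y)$ of random variables with values in $[0,1]$ is coherent if there is an event $A$ with $X=P(A\mid X)$ and $Y=P(A\mid Y)$ (equivalently $X=P(A\mid\mathcal G)$, $Y=P(A\mid\mathcal H)$ for some sub-$\sigma$-fields $\mathcal G,\mathcal H$). *)

theory Defs
  imports "HOL-Probability.Probability"
begin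

definition gen_sigma :: "'a measure \<Rightarrow> ('a \<Rightarrow> real) \<Rightarrow> 'a measure" where
  "gen_sigma M X = vimage_algebra (space M) X borel"

definition coherent :: "'a measure \<Rightarrow> ('a \<Rightarrow> real) \<Rightarrow> ('a \<Rightarrow> real) \<Rightarrow> bool" where
  "coherent M X Y \<longleftrightarrow> (\<exists>A\<in>sets M.
      (AE \<omega> in M. X \<omega> = real_cond_exp M (gen_sigma M X) (indicator A) \<omega>) \<and>
      (AE \<omega> in M. Y \<omega> = real_cond_exp M (gen_sigma M Y) (indicator A) \<omega>))"

end

theory Submission
  imports Defs
begin

text \<open>Suppose \<open>X = E(Z | X)\<close> and \<open>Y = E(Z | Y)\<close>, and let \<open>A = {X \<in> G'}\<close>, which coincides
  almost surely with \<open>{Y \<in> H'}\<close>. Since \<open>A\<close> is \<open>\<sigma>(X)\<close>-measurable and agrees almost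
  surely with a \<open>\<sigma>(Y)\<close>-measurable event, the defining property of conditional expectation gives
  \<open>\<integral>\<^sub>A X = \<integral>\<^sub>A Z = \<integral>\<^sub>A Y\<close>. But on \<open>A\<close> we have \<open>X \<in> G\<close> and \<open>Y \<in> H\<close>, and disjoint intervals
  are strictly ordered, so \<open>Y - X\<close> has constant strict sign on \<open>A\<close>. Hence \<open>A\<close> is a null set.
  A coherent pair is the special case \<open>Z = 1\<^sub>A\<close> for an event \<open>A\<close>.\<close>

lemma disjoint_intervals_ordered:
  fixes G H :: "real set"
  assumes G: "is_interval G" and H: "is_interval H" and disj: "G \<inter> H = {}"
  shows "(\<forall>g\<in>G. \<forall>h\<in>H. g < h) \<or> (\<forall>g\<in>G. \<forall>h\<in>H. h < g)"
proof (rule ccontr)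
  assume "\<not> ?thesis"
  then obtain g1 h1 g2 h2 where "g1 \<in> G" "h1 \<in> H" "h1 \<le> g1" "g2 \<in> G" "h2 \<in> H" "g2 \<le> h2"
    by (auto simp: not_less)
  then have "h1 \<in> G \<or> g2 \<in> H"
    using G[unfolded is_interval_1, rule_format, of g2 g1 h1]
      H[unfolded is_interval_1, rule_format, of h1 h2 g2]
    by (cases "g2 \<le> h1") auto
  then show False
    using \<open>h1 \<in> H\<close> \<open>g2 \<in> G\<close> disj by blast
qed

lemma sigma_finite_subalgebra_gen_sigma:
  assumes "finite_measure M" "X \<in> borel_measurable M"
  shows "sigma_finite_subalgebra M (gen_sigma M X)"
proof -
  have "subalgebra M (gen_sigma M X)"
    unfolding subalgebra_def gen_sigma_def
    using assms(2) by (auto simp: sets_vimage_algebra2 measurable_sets)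
  with assms(1) show ?thesis
    by (intro finite_measure_subalgebra_is_sigma_finite)
      (simp add: finite_measure_subalgebra_def finite_measure_subalgebra_axioms_def)
qed

lemma sets_gen_sigma_preimage:
  assumes "B \<in> sets borel"
  shows "{\<omega> \<in> space M. X \<omega> \<in> B} \<in> sets (gen_sigma M X)"
proof -
  have "X -` B \<inter> space M \<in> sets (gen_sigma M X)"
    unfolding gen_sigma_def using assms by (intro in_vimage_algebra) auto
  then show ?thesis
    by (simp add: Int_def conj_commute)
qed

lemma integral_indicator_eq_if_real_cond_exp:
  assumes "sigma_finite_subalgebra M F" "integrable M Z" "A \<in> sets F"
    and X: "X \<in> borel_measurable M" "AE \<omega> in M. X \<omega> = real_cond_exp M F Z \<omega>"
  shows "integrable M (\<lambda>\<omega>. indicator A \<omega> * X \<omega>)"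
    and "(\<integral>\<omega>. indicator A \<omega> * X \<omega> \<partial>M) = (\<integral>\<omega>. indicator A \<omega> * Z \<omega> \<partial>M)"
proof -
  interpret sigma_finite_subalgebra M F by fact
  have A: "A \<in> sets M"
    using \<open>A \<in> sets F\<close> subalg unfolding subalgebra_def by blast
  have [measurable]: "indicator A \<in> borel_measurable F"
    using \<open>A \<in> sets F\<close> by simp
  have "integrable M (\<lambda>\<omega>. indicator A \<omega> * Z \<omega>)"
    using integrable_mult_indicator[OF A \<open>integrable M Z\<close>] by simp
  note cond_exp = real_cond_exp_intg[OF this, simplified,
      OF borel_measurable_integrable[OF \<open>integrable M Z\<close>]]
  have meas: "(\<lambda>\<omega>. indicator A \<omega> * X \<omega>) \<in> borel_measurable M"
    using A X(1) by measurable
  have ae: "AE \<omega> in M. indicator A \<omega> * real_cond_exp M F Z \<omega> = indicator A \<omega> * X \<omega>"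
    using X(2) by auto
  show "integrable M (\<lambda>\<omega>. indicator A \<omega> * X \<omega>)"
    using integrable_cong_AE_imp[OF cond_exp(1) meas ae] .
  have "(\<integral>\<omega>. indicator A \<omega> * X \<omega> \<partial>M) = (\<integral>\<omega>. indicator A \<omega> * real_cond_exp M F Z \<omega> \<partial>M)"
    using ae meas borel_measurable_integrable[OF cond_exp(1)] by (intro integral_cong_AE) auto
  with cond_exp(2) show "(\<integral>\<omega>. indicator A \<omega> * X \<omega> \<partial>M) = (\<integral>\<omega>. indicator A \<omega> * Z \<omega> \<partial>M)"
    by simp
qed

lemma measure_zero_if_integral_indicator_eq_less:
  fixes X Y :: "'a \<Rightarrow> real"
  assumes A: "A \<in> sets M"
    and int: "integrable M (\<lambda>\<omega>. indicator A \<omega> * X \<omega>)" "integrable M (\<lambda>\<omega>. indicator A \<omega> * Y \<omega>)"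
    and eq: "(\<integral>\<omega>. indicator A \<omega> * X \<omega> \<partial>M) = (\<integral>\<omega>. indicator A \<omega> * Y \<omega> \<partial>M)"
    and less: "AE \<omega> in M. \<omega> \<in> A \<longrightarrow> X \<omega> < Y \<omega>"
  shows "measure M A = 0"
proof -
  let ?f = "\<lambda>\<omega>. indicator A \<omega> * Y \<omega> - indicator A \<omega> * X \<omega>"
  have "integrable M ?f"
    using int by simp
  moreover have "integral\<^sup>L M ?f = 0"
    using int eq by simp
  moreover have "AE \<omega> in M. 0 \<le> ?f \<omega>"
    using less by eventually_elim (auto simp: indicator_def)
  ultimately have "AE \<omega> in M. ?f \<omega> = 0"
    using integral_nonneg_eq_0_iff_AE by blast
  then have "AE \<omega> in M. \<omega> \<notin> A"
    using less by eventually_elim (auto simp: indicator_def)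
  moreover have "{\<omega> \<in> space M. \<not> \<omega> \<notin> A} = A"
    using sets.sets_into_space[OF A] by auto
  ultimately show ?thesis
    by (simp add: AE_iff_measurable[OF A] measure_def)
qed

lemma integral_indicator_cong_AE:
  fixes f :: "'a \<Rightarrow> real"
  assumes "A \<in> sets M" "B \<in> sets M" "f \<in> borel_measurable M"
    and "AE \<omega> in M. (\<omega> \<in> A) = (\<omega> \<in> B)"
  shows "(\<integral>\<omega>. indicator A \<omega> * f \<omega> \<partial>M) = (\<integral>\<omega>. indicator B \<omega> * f \<omega> \<partial>M)"
  using assms by (intro integral_cong_AE) (auto simp: indicator_def)

lemma integral_indicator_eq_if_common_real_cond_exp:
  fixes X Y :: "'a \<Rightarrow> real"
  assumes M: "finite_measure M" and Z: "integrable M Z"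
    and X: "X \<in> borel_measurable M" "AE \<omega> in M. X \<omega> = real_cond_exp M (gen_sigma M X) Z \<omega>"
    and Y: "Y \<in> borel_measurable M" "AE \<omega> in M. Y \<omega> = real_cond_exp M (gen_sigma M Y) Z \<omega>"
    and G'H': "G' \<in> sets borel" "H' \<in> sets borel"
    and linked: "AE \<omega> in M. (X \<omega> \<in> G') = (Y \<omega> \<in> H')"
  defines "A \<equiv> {\<omega> \<in> space M. X \<omega> \<in> G'}"
  shows "integrable M (\<lambda>\<omega>. indicator A \<omega> * X \<omega>)"
    and "integrable M (\<lambda>\<omega>. indicator A \<omega> * Y \<omega>)"
    and "(\<integral>\<omega>. indicator A \<omega> * X \<omega> \<partial>M) = (\<integral>\<omega>. indicator A \<omega> * Y \<omega> \<partial>M)"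
proof -
  define B where "B = {\<omega> \<in> space M. Y \<omega> \<in> H'}"
  have A: "A \<in> sets M" and B: "B \<in> sets M"
    unfolding A_def B_def using X(1) Y(1) G'H' by measurable
  have AB: "AE \<omega> in M. (\<omega> \<in> A) = (\<omega> \<in> B)"
    using linked by (auto simp: A_def B_def)
  have "A \<in> sets (gen_sigma M X)" and "B \<in> sets (gen_sigma M Y)"
    unfolding A_def B_def using G'H' by (auto intro: sets_gen_sigma_preimage)
  note X_int = integral_indicator_eq_if_real_cond_exp[OF sigma_finite_subalgebra_gen_sigma[OF M X(1)]
      Z \<open>A \<in> sets (gen_sigma M X)\<close> X]
  note Y_int = integral_indicator_eq_if_real_cond_exp[OF sigma_finite_subalgebra_gen_sigma[OF M Y(1)]
      Z \<open>B \<in> sets (gen_sigma M Y)\<close> Y]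
  show "integrable M (\<lambda>\<omega>. indicator A \<omega> * X \<omega>)"
    by (fact X_int(1))
  show "integrable M (\<lambda>\<omega>. indicator A \<omega> * Y \<omega>)"
    using Y_int(1) by (rule integrable_cong_AE_imp) (use A Y(1) AB in \<open>auto simp: indicator_def\<close>)
  have "(\<integral>\<omega>. indicator A \<omega> * X \<omega> \<partial>M) = (\<integral>\<omega>. indicator A \<omega> * Z \<omega> \<partial>M)"
    by (fact X_int(2))
  also have "\<dots> = (\<integral>\<omega>. indicator B \<omega> * Z \<omega> \<partial>M)"
    using A B Z AB by (intro integral_indicator_cong_AE) auto
  also have "\<dots> = (\<integral>\<omega>. indicator B \<omega> * Y \<omega> \<partial>M)"
    by (fact Y_int(2)[symmetric])
  also have "\<dots> = (\<integral>\<omega>. indicator A \<omega> * Y \<omega> \<partial>M)"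
    using A B Y(1) AB by (intro integral_indicator_cong_AE) auto
  finally show "(\<integral>\<omega>. indicator A \<omega> * X \<omega> \<partial>M) = (\<integral>\<omega>. indicator A \<omega> * Y \<omega> \<partial>M)" .
qed

lemma no_common_real_cond_exp:
  fixes X Y :: "'a \<Rightarrow> real"
  assumes M: "finite_measure M"
    and X: "X \<in> borel_measurable M" and Y: "Y \<in> borel_measurable M"
    and GH: "is_interval G" "is_interval H" "G \<inter> H = {}"
    and G'H': "G' \<in> sets borel" "H' \<in> sets borel" "G' \<subseteq> G" "H' \<subseteq> H"
    and linked: "AE \<omega> in M. (X \<omega> \<in> G') = (Y \<omega> \<in> H')"
    and pos: "measure M {\<omega> \<in> space M. X \<omega> \<in> G'} > 0"
  shows "\<nexists>Z. integrable M Z \<and>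
            (AE \<omega> in M. X \<omega> = real_cond_exp M (gen_sigma M X) Z \<omega>) \<and>
            (AE \<omega> in M. Y \<omega> = real_cond_exp M (gen_sigma M Y) Z \<omega>)"
proof clarify
  fix Z assume Z: "integrable M Z"
    and X_cond: "AE \<omega> in M. X \<omega> = real_cond_exp M (gen_sigma M X) Z \<omega>"
    and Y_cond: "AE \<omega> in M. Y \<omega> = real_cond_exp M (gen_sigma M Y) Z \<omega>"
  define A where "A = {\<omega> \<in> space M. X \<omega> \<in> G'}"
  note A_int = integral_indicator_eq_if_common_real_cond_exp[OF M Z X X_cond Y Y_cond
      G'H'(1,2) linked, folded A_def]
  have A: "A \<in> sets M"
    unfolding A_def using X G'H'(1) by measurable
  have in_GH: "AE \<omega> in M. \<omega> \<in> A \<longrightarrow> X \<omega> \<in> G \<and> Y \<omega> \<in> H"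
    using linked G'H' by (auto simp: A_def)
  from disjoint_intervals_ordered[OF GH] have "measure M A = 0"
  proof
    assume G_below_H: "\<forall>g\<in>G. \<forall>h\<in>H. g < h"
    from in_GH have "AE \<omega> in M. \<omega> \<in> A \<longrightarrow> X \<omega> < Y \<omega>"
      by eventually_elim (use G_below_H in auto)
    then show ?thesis
      by (rule measure_zero_if_integral_indicator_eq_less[OF A A_int])
  next
    assume H_below_G: "\<forall>g\<in>G. \<forall>h\<in>H. h < g"
    from in_GH have "AE \<omega> in M. \<omega> \<in> A \<longrightarrow> Y \<omega> < X \<omega>"
      by eventually_elim (use H_below_G in auto)
    then show ?thesis
      by (rule measure_zero_if_integral_indicator_eq_less[OF A A_int(2,1) A_int(3)[symmetric]])
  qed
  then show False
    using pos by (simp add: A_def)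
qed

lemma coherent_imp_common_real_cond_exp:
  assumes "finite_measure M" "coherent M X Y"
  shows "\<exists>Z. integrable M Z \<and>
            (AE \<omega> in M. X \<omega> = real_cond_exp M (gen_sigma M X) Z \<omega>) \<and>
            (AE \<omega> in M. Y \<omega> = real_cond_exp M (gen_sigma M Y) Z \<omega>)"
proof -
  obtain A where "A \<in> sets M"
    and "AE \<omega> in M. X \<omega> = real_cond_exp M (gen_sigma M X) (indicator A) \<omega>"
    and "AE \<omega> in M. Y \<omega> = real_cond_exp M (gen_sigma M Y) (indicator A) \<omega>"
    using assms(2) unfolding coherent_def by blast
  moreover have "integrable M (indicator A :: 'a \<Rightarrow> real)"
    using \<open>A \<in> sets M\<close> assms(1) by (simp add: finite_measure.emeasure_finite less_top[symmetric])
  ultimately show ?thesis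
    by blast
qed

theorem proposition2p1:
  fixes M :: "'a measure" and X Y :: "'a \<Rightarrow> real" and G H G' H' :: "real set"
  assumes "prob_space M"
    and "X \<in> borel_measurable M" and "Y \<in> borel_measurable M"
    and "is_interval G" and "is_interval H" and "G \<inter> H = {}"
    and "G' \<in> sets borel" and "H' \<in> sets borel" and "G' \<subseteq> G" and "H' \<subseteq> H"
    and "AE \<omega> in M. (X \<omega> \<in> G') = (Y \<omega> \<in> H')"
    and "measure M {\<omega> \<in> space M. X \<omega> \<in> G'} > 0"
  shows "\<not> (\<exists>Z. integrable M Z \<and>
            (AE \<omega> in M. X \<omega> = real_cond_exp M (gen_sigma M X) Z \<omega>) \<and>
            (AE \<omega> in M. Y \<omega> = real_cond_exp M (gen_sigma M Y) Z \<omega>))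
         \<and> ((\<forall>\<omega>\<in>space M. X \<omega> \<in> {0..1} \<and> Y \<omega> \<in> {0..1}) \<longrightarrow> \<not> coherent M X Y)"
proof -
  have M: "finite_measure M"
    using assms(1) by (rule prob_space.finite_measure)
  show ?thesis
    using no_common_real_cond_exp[OF M assms(2-12)] coherent_imp_common_real_cond_exp[OF M]
    by blast
qed

end
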